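(* For all integers $n\ge 1$, $c\ge 0$ and $k$, $$\left\langle {n \atop k}\right\rangle_{\!c}=\left\langle {n \atop c(n-1)-k}\right\rangle_{\!c}.$$
   Context: A $c$-rook placement on an $n\times n$ board is a placement of $cn$ rooks on the cells, several rooks being allowed in the same cell, such that every row and every column contains exactly $c$ rooks (equivalently, an $n\times n$ matrix of nonnegative integers with all row and column sums equal to $c$). A drop is a rook lying strictly below the main diagonal, i.e.\ in a cell $(i,j)$ (row $i$, column $j$) with $i>j$, counted with multiplicity. The generalized Eulerian number $\left\langle {n \atop k}\right\rangle_{\!c}$ is the number of $c$-rook placements on the $n\times n$ board with exactly $k$ drops (this is $0$ if $k<0$). *)

theory Defs
  imports Main
begin

text \<open>A c-rook placement on the n x n board: a matrix of nonnegative integers,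
  represented as a function on nat x nat that vanishes outside {0..<n} x {0..<n},
  with every row and column sum equal to c.\<close>
definition rook_placements :: "nat \<Rightarrow> nat \<Rightarrow> (nat \<Rightarrow> nat \<Rightarrow> nat) set" where
  "rook_placements n c = {A. (\<forall>i j. (i \<ge> n \<or> j \<ge> n) \<longrightarrow> A i j = 0)
      \<and> (\<forall>i<n. (\<Sum>j<n. A i j) = c) \<and> (\<forall>j<n. (\<Sum>i<n. A i j) = c)}"

definition drops :: "nat \<Rightarrow> (nat \<Rightarrow> nat \<Rightarrow> nat) \<Rightarrow> nat" where
  "drops n A = (\<Sum>i<n. \<Sum>j<i. A i j)"

definition gen_eulerian :: "nat \<Rightarrow> int \<Rightarrow> nat \<Rightarrow> nat" where
  "gen_eulerian n k c = (if k < 0 then 0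
     else card {A \<in> rook_placements n c. int (drops n A) = k})"

end

theory Submission
  imports Defs
begin

text \<open>Reverse the order of the rows, and permute the columns by the cyclic shift
  \<open>j \<mapsto> j + 1 mod n\<close> followed by reversal. This is an involution on \<open>c\<close>-rook
  placements that turns the rooks on or above the diagonal outside the last column into the drops.
  The last column holds \<open>c\<close> rooks and the whole board \<open>c n\<close>, so a placement with
  \<open>k\<close> drops is sent to one with \<open>c n - c - k\<close> drops.\<close>

definition board_sum :: "nat \<Rightarrow> (nat \<Rightarrow> nat \<Rightarrow> bool) \<Rightarrow> (nat \<Rightarrow> nat \<Rightarrow> nat) \<Rightarrow> nat" where
  "board_sum n P A = (\<Sum>i<n. \<Sum>j<n. if P i j then A i j else 0)"

definition permute_board ::
    "nat \<Rightarrow> (nat \<Rightarrow> nat) \<Rightarrow> (nat \<Rightarrow> nat) \<Rightarrow> (nat \<Rightarrow> nat \<Rightarrow> nat) \<Rightarrow> nat \<Rightarrow> nat \<Rightarrow> nat" where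
  "permute_board n \<sigma> \<tau> A i j = (if i < n \<and> j < n then A (\<sigma> i) (\<tau> j) else 0)"

lemma board_sum_cong:
  "(\<And>i j. i < n \<Longrightarrow> j < n \<Longrightarrow> P i j \<longleftrightarrow> Q i j) \<Longrightarrow> board_sum n P A = board_sum n Q A"
  unfolding board_sum_def by (intro sum.cong) auto

lemma board_sum_disjoint_Un:
  assumes "\<And>i j. i < n \<Longrightarrow> j < n \<Longrightarrow> \<not> (P i j \<and> Q i j)"
  shows "board_sum n P A + board_sum n Q A = board_sum n (\<lambda>i j. P i j \<or> Q i j) A"
  unfolding board_sum_def sum.distrib[symmetric] by (intro sum.cong) (use assms in auto)

lemma drops_eq_board_sum: "drops n A = board_sum n (\<lambda>i j. j < i) A"
  unfolding drops_def board_sum_def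
proof (rule sum.cong[OF refl])
  fix i assume "i \<in> {..<n}"
  then have "{..<n} \<inter> {..<i} = {..<i}" by auto
  then show "(\<Sum>j<i. A i j) = (\<Sum>j<n. if j < i then A i j else 0)"
    using sum.inter_restrict[of "{..<n}" "A i" "{..<i}"] by simp
qed

lemma board_sum_placement:
  assumes "A \<in> rook_placements n c"
  shows "board_sum n (\<lambda>_ _. True) A = c * n"
  using assms by (simp add: board_sum_def rook_placements_def)

lemma board_sum_placement_column:
  assumes "A \<in> rook_placements n c" "j < n"
  shows "board_sum n (\<lambda>_ j'. j' = j) A = c"
proof -
  have "board_sum n (\<lambda>_ j'. j' = j) A = (\<Sum>i<n. A i j)"
    using assms(2) by (simp add: board_sum_def)
  then show ?thesis
    using assms unfolding rook_placements_def by simp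
qed

lemma board_sum_permute_board:
  assumes "bij_betw \<sigma> {..<n} {..<n}" "bij_betw \<tau> {..<n} {..<n}"
  shows "board_sum n (\<lambda>i j. Q (\<sigma> i) (\<tau> j)) (permute_board n \<sigma> \<tau> A) = board_sum n Q A"
proof -
  define f where "f i j = (if Q i j then A i j else 0)" for i j
  have "board_sum n (\<lambda>i j. Q (\<sigma> i) (\<tau> j)) (permute_board n \<sigma> \<tau> A)
      = (\<Sum>i<n. \<Sum>j<n. f (\<sigma> i) (\<tau> j))"
    unfolding board_sum_def permute_board_def f_def by (intro sum.cong) auto
  also have "\<dots> = (\<Sum>i<n. \<Sum>j<n. f (\<sigma> i) j)"
    by (intro sum.cong refl sum.reindex_bij_betw[OF assms(2)])
  also have "\<dots> = board_sum n Q A"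
    unfolding board_sum_def f_def by (rule sum.reindex_bij_betw[OF assms(1)])
  finally show ?thesis .
qed

lemma permute_board_rook_placements:
  assumes "bij_betw \<sigma> {..<n} {..<n}" "bij_betw \<tau> {..<n} {..<n}"
    and "A \<in> rook_placements n c"
  shows "permute_board n \<sigma> \<tau> A \<in> rook_placements n c"
proof -
  have maps: "\<sigma> i < n" "\<tau> i < n" if "i < n" for i
    using assms(1,2) that by (auto dest: bij_betwE)
  have "(\<Sum>j<n. permute_board n \<sigma> \<tau> A i j) = c" if "i < n" for i
  proof -
    have "(\<Sum>j<n. permute_board n \<sigma> \<tau> A i j) = (\<Sum>j<n. A (\<sigma> i) (\<tau> j))"
      using that by (simp add: permute_board_def)
    also have "\<dots> = (\<Sum>j<n. A (\<sigma> i) j)"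
      by (rule sum.reindex_bij_betw[OF assms(2)])
    finally show ?thesis
      using assms(3) maps(1)[OF that] unfolding rook_placements_def by simp
  qed
  moreover have "(\<Sum>i<n. permute_board n \<sigma> \<tau> A i j) = c" if "j < n" for j
  proof -
    have "(\<Sum>i<n. permute_board n \<sigma> \<tau> A i j) = (\<Sum>i<n. A (\<sigma> i) (\<tau> j))"
      using that by (simp add: permute_board_def)
    also have "\<dots> = (\<Sum>i<n. A i (\<tau> j))"
      by (rule sum.reindex_bij_betw[OF assms(1)])
    finally show ?thesis
      using assms(3) maps(2)[OF that] unfolding rook_placements_def by simp
  qed
  ultimately show ?thesis
    unfolding rook_placements_def by (auto simp: permute_board_def)
qed

lemma permute_board_involution:
  assumes "\<And>i. i < n \<Longrightarrow> \<sigma> i < n \<and> \<sigma> (\<sigma> i) = i" "\<And>j. j < n \<Longrightarrow> \<tau> j < n \<and> \<tau> (\<tau> j) = j"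
    and "A \<in> rook_placements n c"
  shows "permute_board n \<sigma> \<tau> (permute_board n \<sigma> \<tau> A) = A"
  using assms unfolding rook_placements_def permute_board_def by (intro ext) auto

lemma involution_bij_betw_lessThan:
  "(\<And>i. i < n \<Longrightarrow> \<sigma> i < n \<and> \<sigma> (\<sigma> i) = i) \<Longrightarrow> bij_betw \<sigma> {..<n} {..<n}"
  by (rule bij_betw_byWitness[where f' = \<sigma>]) auto

definition mirror_index :: "nat \<Rightarrow> nat \<Rightarrow> nat" where
  "mirror_index n i = n - 1 - i"

text \<open>\<open>n - 1 - ((j + 1) mod n)\<close>\<close>
definition shifted_mirror_index :: "nat \<Rightarrow> nat \<Rightarrow> nat" where
  "shifted_mirror_index n j = (if j = n - 1 then n - 1 else n - 2 - j)"

lemma mirror_index_involution: "i < n \<Longrightarrow> mirror_index n i < n \<and> mirror_index n (mirror_index n i) = i"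
  by (simp add: mirror_index_def)

lemma shifted_mirror_index_involution:
  "j < n \<Longrightarrow> shifted_mirror_index n j < n \<and> shifted_mirror_index n (shifted_mirror_index n j) = j"
  by (auto simp: shifted_mirror_index_def)

definition drop_reflection :: "nat \<Rightarrow> (nat \<Rightarrow> nat \<Rightarrow> nat) \<Rightarrow> nat \<Rightarrow> nat \<Rightarrow> nat" where
  "drop_reflection n = permute_board n (mirror_index n) (shifted_mirror_index n)"

lemma drop_reflection_rook_placements:
  "A \<in> rook_placements n c \<Longrightarrow> drop_reflection n A \<in> rook_placements n c"
  unfolding drop_reflection_def
  by (intro permute_board_rook_placements involution_bij_betw_lessThan
      mirror_index_involution shifted_mirror_index_involution)

lemma drop_reflection_involution:
  "A \<in> rook_placements n c \<Longrightarrow> drop_reflection n (drop_reflection n A) = A"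
  unfolding drop_reflection_def
  by (rule permute_board_involution[OF mirror_index_involution shifted_mirror_index_involution])

lemma drops_drop_reflection:
  assumes "A \<in> rook_placements n c" "n \<ge> 1"
  shows "drops n (drop_reflection n A) + c + drops n A = c * n"
proof -
  let ?weak_exc_but_last = "\<lambda>i j. i \<le> j \<and> j < n - 1"
  have "drops n (drop_reflection n A)
      = board_sum n (\<lambda>i j. ?weak_exc_but_last (mirror_index n i) (shifted_mirror_index n j))
          (drop_reflection n A)"
    unfolding drops_eq_board_sum
    by (rule board_sum_cong) (auto simp: mirror_index_def shifted_mirror_index_def)
  also have "\<dots> = board_sum n ?weak_exc_but_last A"
    unfolding drop_reflection_def
    by (intro board_sum_permute_board involution_bij_betw_lessThan
        mirror_index_involution shifted_mirror_index_involution)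
  finally have "drops n (drop_reflection n A) + c + drops n A
      = board_sum n ?weak_exc_but_last A + board_sum n (\<lambda>_ j. j = n - 1) A
        + board_sum n (\<lambda>i j. j < i) A"
    using board_sum_placement_column[OF assms(1), of "n - 1"] assms(2)
    by (simp add: drops_eq_board_sum)
  also have "\<dots> = board_sum n (\<lambda>i j. (?weak_exc_but_last i j \<or> j = n - 1) \<or> j < i) A"
    using board_sum_disjoint_Un[of n ?weak_exc_but_last "\<lambda>_ j. j = n - 1" A]
      board_sum_disjoint_Un[of n "\<lambda>i j. ?weak_exc_but_last i j \<or> j = n - 1" "\<lambda>i j. j < i" A]
    by force
  also have "\<dots> = board_sum n (\<lambda>_ _. True) A"
    by (rule board_sum_cong) auto
  finally show ?thesis
    using board_sum_placement[OF assms(1)] by simp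
qed

definition placements_with_drops :: "nat \<Rightarrow> nat \<Rightarrow> int \<Rightarrow> (nat \<Rightarrow> nat \<Rightarrow> nat) set" where
  "placements_with_drops n c k = {A \<in> rook_placements n c. int (drops n A) = k}"

lemma gen_eulerian_eq_card: "gen_eulerian n k c = card (placements_with_drops n c k)"
  unfolding gen_eulerian_def placements_with_drops_def by auto

lemma bij_betw_drop_reflection:
  assumes "n \<ge> 1"
  shows "bij_betw (drop_reflection n)
           (placements_with_drops n c k) (placements_with_drops n c (int c * (int n - 1) - k))"
proof (rule bij_betw_byWitness[where f' = "drop_reflection n"])
  have "int (drops n (drop_reflection n A)) = int c * (int n - 1) - int (drops n A)"
    if "A \<in> rook_placements n c" for A
    using drops_drop_reflection[OF that assms] by (simp add: algebra_simps flip: of_nat_add of_nat_mult)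
  then show "drop_reflection n ` placements_with_drops n c k
      \<subseteq> placements_with_drops n c (int c * (int n - 1) - k)"
    and "drop_reflection n ` placements_with_drops n c (int c * (int n - 1) - k)
      \<subseteq> placements_with_drops n c k"
    by (auto simp: placements_with_drops_def drop_reflection_rook_placements)
qed (auto simp: placements_with_drops_def drop_reflection_involution)

theorem theorem4p1:
  fixes n c :: nat and k :: int
  assumes "n \<ge> 1"
  shows "gen_eulerian n k c = gen_eulerian n (int c * (int n - 1) - k) c"
  unfolding gen_eulerian_eq_card
  using bij_betw_drop_reflection[OF assms] by (rule bij_betw_same_card)

end
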